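(* For all integers $\ell\ge1$, $k\ge1$, $n\ge1$, $$f_\ell(n,k)\le 2^{\lfloor \ell/2\rfloor}\cdot\lfloor \ell/2\rfloor!\cdot n^{\lfloor (\ell+1)/2\rfloor}.$$ Moreover, if $k\ge\lfloor\log_2(\ell+1)\rfloor$, then $$f_\ell(n,k)\ge \left\lfloor\frac nk\right\rfloor^{\lfloor\log_2(\ell+1)\rfloor}.$$
   Context: For a set $A$ and integer $k\ge1$, the Kneser graph $KG(A,k)$ has vertex set the family of all $k$-element subsets of $A$, two vertices $X,Y$ being adjacent iff $X\cap Y=\emptyset$; $KG(n,k)$ denotes one with an $n$-element base set. The xor-product of graphs $G_1,\dots,G_\ell$ has vertex set $V(G_1)\times\dots\times V(G_\ell)$, two vertices being adjacent iff they are adjacent in an odd number of coordinates. $f_\ell(n,k)$ is the clique number of the xor-product of $\ell$ copies of $KG(n,k)$; equivalently, the maximum size of a family $\mathcal S$ of subsets of $A_1\cup\dots\cup A_\ell$ ($A_i$ pairwise disjoint, $|A_i|=n$) with $|S\cap A_i|=k$ for all $S\in\mathcal S$ and all $i$, such that for distinct $S,T\in\mathcal S$ the number of $i$ with $S\cap T\cap A_i=\emptyset$ is odd. *)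

theory Defs
  imports Complex_Main "HOL-Library.FuncSet"
begin

definition kneser_vertices :: "nat \<Rightarrow> nat \<Rightarrow> nat set set" where
  "kneser_vertices n k = {X. X \<subseteq> {0..<n} \<and> card X = k}"

definition kneser_adj :: "nat set \<Rightarrow> nat set \<Rightarrow> bool" where
  "kneser_adj X Y \<longleftrightarrow> X \<inter> Y = {}"

definition xor_kneser_vertices :: "nat \<Rightarrow> nat \<Rightarrow> nat \<Rightarrow> (nat \<Rightarrow> nat set) set" where
  "xor_kneser_vertices l n k = PiE {0..<l} (\<lambda>_. kneser_vertices n k)"

definition xor_kneser_adj :: "nat \<Rightarrow> (nat \<Rightarrow> nat set) \<Rightarrow> (nat \<Rightarrow> nat set) \<Rightarrow> bool" where
  "xor_kneser_adj l x y \<longleftrightarrow> odd (card {i \<in> {0..<l}. kneser_adj (x i) (y i)})"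

definition is_xor_kneser_clique :: "nat \<Rightarrow> nat \<Rightarrow> nat \<Rightarrow> (nat \<Rightarrow> nat set) set \<Rightarrow> bool" where
  "is_xor_kneser_clique l n k C \<longleftrightarrow> C \<subseteq> xor_kneser_vertices l n k \<and>
     (\<forall>x\<in>C. \<forall>y\<in>C. x \<noteq> y \<longrightarrow> xor_kneser_adj l x y)"

definition f_xor :: "nat \<Rightarrow> nat \<Rightarrow> nat \<Rightarrow> nat" where
  "f_xor l n k = Max {card C | C. is_xor_kneser_clique l n k C}"

end

theory Submission
  imports Defs
begin

text \<open>
  Upper bound: call a family of tuples an xor-family on the coordinate set \<open>I\<close> if distinct
  members are disjoint in an odd number of coordinates of \<open>I\<close>. The members whose \<open>j\<close>-th set
  contains a fixed point \<open>a\<close> form an xor-family on \<open>I - {j}\<close>. If \<open>|I|\<close> is odd, double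
  counting the pairs (member, point of its \<open>j\<close>-th set) bounds \<open>k |C|\<close> by \<open>n\<close> times the largest
  such family. If \<open>|I|\<close> is even, every member meets a fixed member \<open>S\<close> in some coordinate
  (an even number minus an odd one is positive), so \<open>C\<close> is covered by the \<open>k |I|\<close> families
  given by the points of \<open>S\<close>, and the odd case bounds each of them. Iterating gives
  \<open>|C| \<le> 2^m m! n^m\<close> for \<open>|I| = 2m\<close> and \<open>k |C| \<le> 2^m m! n^(m+1)\<close> for \<open>|I| = 2m+1\<close>.

  Lower bound: with \<open>q = n div k\<close> split \<open>{0..<qk}\<close> into \<open>k\<close> blocks of length \<open>q\<close>. A word
  \<open>v \<in> {0..<q}^t\<close> and a nonempty \<open>U \<subseteq> {0..<t}\<close> (\<open>t \<le> k\<close>) give the \<open>k\<close>-set picking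
  \<open>v r\<close> in block \<open>r\<close> for \<open>r \<in> U\<close> and \<open>v (Min U)\<close> in the other blocks; the sets of \<open>v\<close> and
  \<open>w\<close> are disjoint iff \<open>v\<close> and \<open>w\<close> differ on all of \<open>U\<close>. Using the \<open>2^t - 1 \<le> l\<close> nonempty
  \<open>U\<close> as coordinates and the constant vertex \<open>{0..<k}\<close> on the others, words \<open>v \<noteq> w\<close> become
  disjoint in exactly \<open>2^|D| - 1\<close> coordinates, \<open>D \<noteq> {}\<close> being the positions where they differ.
\<close>

text \<open>Coordinates outside \<open>I\<close> are unconstrained, so that restricting to a point of one
  coordinate again yields an xor-family, on the remaining coordinates.\<close>
definition xor_family :: "nat set \<Rightarrow> nat \<Rightarrow> nat \<Rightarrow> (nat \<Rightarrow> nat set) set \<Rightarrow> bool" where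
  "xor_family I n k C \<longleftrightarrow> finite C \<and> (\<forall>x\<in>C. \<forall>i\<in>I. x i \<in> kneser_vertices n k) \<and>
     (\<forall>x\<in>C. \<forall>y\<in>C. x \<noteq> y \<longrightarrow> odd (card {i\<in>I. kneser_adj (x i) (y i)}))"

lemma finite_kneser_vertices: "finite (kneser_vertices n k)"
  unfolding kneser_vertices_def by (rule finite_subset[of _ "Pow {0..<n}"]) auto

lemma finite_xor_kneser_vertices: "finite (xor_kneser_vertices l n k)"
  unfolding xor_kneser_vertices_def by (simp add: finite_PiE finite_kneser_vertices)

lemma xor_family_of_clique:
  assumes "is_xor_kneser_clique l n k C"
  shows "xor_family {0..<l} n k C"
proof -
  have "finite C"
    using assms finite_xor_kneser_vertices finite_subset unfolding is_xor_kneser_clique_def by blast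
  with assms show ?thesis
    unfolding xor_family_def is_xor_kneser_clique_def xor_kneser_vertices_def xor_kneser_adj_def
    by (auto simp: PiE_iff)
qed

lemma card_le_1_if_xor_family_empty:
  assumes "xor_family {} n k C"
  shows "card C \<le> 1"
  using assms unfolding xor_family_def by (auto simp: card_le_Suc0_iff_eq)

lemma xor_family_star:
  assumes "xor_family I n k C"
  shows "xor_family (I - {j}) n k {x\<in>C. a \<in> x j}"
proof -
  have "{i\<in>I - {j}. kneser_adj (x i) (y i)} = {i\<in>I. kneser_adj (x i) (y i)}"
    if "a \<in> x j" "a \<in> y j" for x y
    using that unfolding kneser_adj_def by auto
  with assms show ?thesis
    unfolding xor_family_def by auto
qed

lemma xor_family_double_count:
  assumes "xor_family I n k C" "j \<in> I"
  shows "(\<Sum>a<n. card {x\<in>C. a \<in> x j}) = k * card C"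
proof (rule sum_multicount)
  show "finite C"
    using assms(1) unfolding xor_family_def by blast
  show "\<forall>x\<in>C. card {a\<in>{..<n}. a \<in> x j} = k"
  proof
    fix x assume "x \<in> C"
    then have "x j \<subseteq> {..<n}" "card (x j) = k"
      using assms unfolding xor_family_def kneser_vertices_def by (auto simp: atLeast0LessThan)
    then have "{a\<in>{..<n}. a \<in> x j} = x j" by auto
    with \<open>card (x j) = k\<close> show "card {a\<in>{..<n}. a \<in> x j} = k" by simp
  qed
qed simp

lemma xor_family_odd_step:
  assumes C: "xor_family I n k C" and j: "j \<in> I"
    and bound: "\<And>D. xor_family (I - {j}) n k D \<Longrightarrow> card D \<le> E"
  shows "k * card C \<le> n * E"
proof -
  have "k * card C = (\<Sum>a<n. card {x\<in>C. a \<in> x j})"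
    using xor_family_double_count[OF C j] by simp
  also have "\<dots> \<le> n * E"
    using sum_bounded_above[of "{..<n}" "\<lambda>a. card {x\<in>C. a \<in> x j}" E]
      bound[OF xor_family_star[OF C]] by simp
  finally show ?thesis .
qed

lemma xor_family_stars_cover:
  assumes C: "xor_family I n k C" and I: "finite I" "even (card I)" "I \<noteq> {}"
    and k: "0 < k" and S: "S \<in> C"
  shows "C \<subseteq> (\<Union>j\<in>I. \<Union>a\<in>S j. {x\<in>C. a \<in> x j})"
proof
  fix x assume x: "x \<in> C"
  have "\<exists>j\<in>I. x j \<inter> S j \<noteq> {}"
  proof (cases "x = S")
    case True
    obtain j where "j \<in> I" using I(3) by blast
    moreover have "card (S j) = k"
      using C S \<open>j \<in> I\<close> unfolding xor_family_def kneser_vertices_def by auto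
    ultimately show ?thesis
      using True k by (metis Int_absorb card.empty less_irrefl)
  next
    case False
    let ?D = "{i\<in>I. kneser_adj (x i) (S i)}"
    have "odd (card ?D)"
      using C S x False unfolding xor_family_def by blast
    then have "?D \<noteq> I"
      using I(2) by auto
    then show ?thesis
      unfolding kneser_adj_def by blast
  qed
  then show "x \<in> (\<Union>j\<in>I. \<Union>a\<in>S j. {x\<in>C. a \<in> x j})"
    using x by blast
qed

lemma xor_family_even_step:
  assumes C: "xor_family I n k C" and I: "finite I" "even (card I)" "I \<noteq> {}"
    and k: "0 < k"
    and bound: "\<And>j D. j \<in> I \<Longrightarrow> xor_family (I - {j}) n k D \<Longrightarrow> k * card D \<le> B"
  shows "card C \<le> card I * B"
proof (cases "C = {}")
  case False
  then obtain S where S: "S \<in> C" by blast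
  have S_vert: "finite (S j) \<and> card (S j) = k" if "j \<in> I" for j
    using C S that unfolding xor_family_def kneser_vertices_def by (auto intro: finite_subset)
  have star_sum: "(\<Sum>a\<in>S j. card {x\<in>C. a \<in> x j}) \<le> B" if j: "j \<in> I" for j
  proof -
    have "k * (\<Sum>a\<in>S j. card {x\<in>C. a \<in> x j}) \<le> k * B"
      using sum_bounded_above[of "S j" "\<lambda>a. k * card {x\<in>C. a \<in> x j}" B]
        bound[OF j xor_family_star[OF C]] S_vert[OF j] by (simp add: sum_distrib_left)
    then show ?thesis
      using k by simp
  qed
  have "finite C"
    using C unfolding xor_family_def by blast
  moreover have "(\<Union>j\<in>I. \<Union>a\<in>S j. {x\<in>C. a \<in> x j}) \<subseteq> C"
    by blast
  ultimately have "card C \<le> card (\<Union>j\<in>I. \<Union>a\<in>S j. {x\<in>C. a \<in> x j})"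
    by (intro card_mono xor_family_stars_cover[OF C I k S]) (rule finite_subset)
  also have "\<dots> \<le> (\<Sum>j\<in>I. card (\<Union>a\<in>S j. {x\<in>C. a \<in> x j}))"
    by (rule card_UN_le[OF I(1)])
  also have "\<dots> \<le> (\<Sum>j\<in>I. \<Sum>a\<in>S j. card {x\<in>C. a \<in> x j})"
    using S_vert by (intro sum_mono card_UN_le) blast
  also have "\<dots> \<le> card I * B"
    using sum_bounded_above[of I _ B] star_sum by simp
  finally show ?thesis .
qed simp

lemma xor_family_card_le_even:
  assumes k: "0 < k"
  shows "finite I \<Longrightarrow> card I = 2 * m \<Longrightarrow> xor_family I n k C \<Longrightarrow>
    card C \<le> 2 ^ m * fact m * n ^ m"
proof (induction m arbitrary: I C)
  case 0
  then show ?case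
    using card_le_1_if_xor_family_empty by simp
next
  case (Suc m)
  have odd_bound: "k * card D \<le> 2 ^ m * fact m * n ^ Suc m"
    if j: "j \<in> I" and D: "xor_family (I - {j}) n k D" for j D
  proof -
    have card_I_j: "card (I - {j}) = Suc (2 * m)"
      using Suc.prems(1,2) j by simp
    then have "I - {j} \<noteq> {}"
      by (metis card.empty nat.distinct(1))
    then obtain j' where j': "j' \<in> I - {j}"
      by blast
    have rest: "finite (I - {j} - {j'})" "card (I - {j} - {j'}) = 2 * m"
      using Suc.prems(1) card_I_j j' by simp_all
    have "card E \<le> 2 ^ m * fact m * n ^ m" if "xor_family (I - {j} - {j'}) n k E" for E
      by (rule Suc.IH[OF rest that])
    then have "k * card D \<le> n * (2 ^ m * fact m * n ^ m)"
      by (rule xor_family_odd_step[OF D j'])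
    then show ?thesis
      by (simp add: mult_ac)
  qed
  have "card C \<le> card I * (2 ^ m * fact m * n ^ Suc m)"
  proof (rule xor_family_even_step[OF Suc.prems(3,1) _ _ k odd_bound])
    show "even (card I)" "I \<noteq> {}"
      using Suc.prems(2) by auto
  qed
  also have "\<dots> = 2 ^ Suc m * fact (Suc m) * n ^ Suc m"
    unfolding Suc.prems(2) by (simp only: power_Suc fact_Suc of_nat_id mult_ac)
  finally show ?case .
qed

lemma xor_family_card_le_odd:
  assumes k: "0 < k" and I: "finite I" "card I = 2 * m + 1" and C: "xor_family I n k C"
  shows "k * card C \<le> 2 ^ m * fact m * n ^ (m + 1)"
proof -
  obtain j where j: "j \<in> I"
    using I(2) by fastforce
  have "card (I - {j}) = 2 * m"
    using I j by simp
  then have "card D \<le> 2 ^ m * fact m * n ^ m" if "xor_family (I - {j}) n k D" for D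
    using I(1) by (intro xor_family_card_le_even[OF k _ _ that]) simp_all
  then have "k * card C \<le> n * (2 ^ m * fact m * n ^ m)"
    by (rule xor_family_odd_step[OF C j])
  then show ?thesis
    by (simp add: mult_ac)
qed

lemma xor_kneser_clique_card_le:
  assumes C: "is_xor_kneser_clique l n k C" and k: "0 < k"
  shows "card C \<le> 2 ^ (l div 2) * fact (l div 2) * n ^ ((l + 1) div 2)"
proof (cases "even l")
  case True
  then show ?thesis
    using xor_family_card_le_even[OF k, of "{0..<l}" "l div 2"] xor_family_of_clique[OF C] by simp
next
  case False
  then have "card C \<le> k * card C"
    using k by simp
  also have "\<dots> \<le> 2 ^ (l div 2) * fact (l div 2) * n ^ (l div 2 + 1)"
    using False xor_family_of_clique[OF C] by (intro xor_family_card_le_odd[OF k]) auto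
  finally show ?thesis
    using False by simp
qed

lemma finite_xor_kneser_clique_cards: "finite {card C | C. is_xor_kneser_clique l n k C}"
proof (rule finite_subset)
  show "{card C | C. is_xor_kneser_clique l n k C} \<subseteq> {..card (xor_kneser_vertices l n k)}"
    unfolding is_xor_kneser_clique_def using finite_xor_kneser_vertices by (auto intro: card_mono)
qed simp

lemma card_le_f_xor:
  assumes "is_xor_kneser_clique l n k C"
  shows "card C \<le> f_xor l n k"
  unfolding f_xor_def using assms by (intro Max_ge finite_xor_kneser_clique_cards) blast

lemma f_xor_le:
  assumes "\<And>C. is_xor_kneser_clique l n k C \<Longrightarrow> card C \<le> B"
  shows "f_xor l n k \<le> B"
proof -
  have "is_xor_kneser_clique l n k {}"
    unfolding is_xor_kneser_clique_def by simp
  then show ?thesis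
    unfolding f_xor_def using assms finite_xor_kneser_clique_cards
    by (subst Max_le_iff) auto
qed

lemma not_xor_kneser_adj_self:
  assumes "x \<in> xor_kneser_vertices l n k" "0 < k"
  shows "\<not> xor_kneser_adj l x x"
proof -
  have "card (x i) = k" if "i \<in> {0..<l}" for i
    using assms(1) that unfolding xor_kneser_vertices_def kneser_vertices_def by (auto simp: PiE_iff)
  then have "{i\<in>{0..<l}. kneser_adj (x i) (x i)} = {}"
    using assms(2) unfolding kneser_adj_def by force
  then show ?thesis
    unfolding xor_kneser_adj_def by (simp only: card.empty) simp
qed

lemma xor_kneser_clique_image:
  assumes k: "0 < k" and vert: "\<And>v. v \<in> V \<Longrightarrow> \<phi> v \<in> xor_kneser_vertices l n k"
    and adj: "\<And>v w. v \<in> V \<Longrightarrow> w \<in> V \<Longrightarrow> v \<noteq> w \<Longrightarrow> xor_kneser_adj l (\<phi> v) (\<phi> w)"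
  shows "is_xor_kneser_clique l n k (\<phi> ` V) \<and> card (\<phi> ` V) = card V"
proof
  show "is_xor_kneser_clique l n k (\<phi> ` V)"
    unfolding is_xor_kneser_clique_def using vert adj by fastforce
  have "inj_on \<phi> V"
    using adj not_xor_kneser_adj_self[OF vert k] by (metis inj_onI)
  then show "card (\<phi> ` V) = card V"
    by (rule card_image)
qed

definition block_transversal :: "nat \<Rightarrow> nat \<Rightarrow> (nat \<Rightarrow> nat) \<Rightarrow> nat set" where
  "block_transversal q k c = (\<lambda>s. s * q + c s) ` {0..<k}"

lemma mult_add_eq_mult_add_iff:
  fixes a b q :: nat
  assumes "a < q" "b < q"
  shows "s * q + a = s' * q + b \<longleftrightarrow> s = s' \<and> a = b"
proof
  assume eq: "s * q + a = s' * q + b"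
  have "s = s'"
    using arg_cong[OF eq, of "\<lambda>m. m div q"] assms by simp
  with eq show "s = s' \<and> a = b"
    by simp
qed auto

lemma block_transversal_in_kneser_vertices:
  assumes c: "\<And>s. s < k \<Longrightarrow> c s < q" and "q * k \<le> n"
  shows "block_transversal q k c \<in> kneser_vertices n k"
proof -
  have "s * q + c s < n" if "s < k" for s
  proof -
    have "s * q + c s < (s + 1) * q"
      using c[OF that] by simp
    also have "\<dots> \<le> k * q"
      using that by (intro mult_le_mono1) simp
    finally show ?thesis
      using \<open>q * k \<le> n\<close> by (simp add: mult.commute)
  qed
  moreover have "inj_on (\<lambda>s. s * q + c s) {0..<k}"
    using c mult_add_eq_mult_add_iff by (auto intro: inj_onI)
  ultimately show ?thesis
    unfolding block_transversal_def kneser_vertices_def by (auto simp: card_image)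
qed

lemma block_transversal_disjoint_iff:
  assumes "\<And>s. s < k \<Longrightarrow> c s < q" "\<And>s. s < k \<Longrightarrow> c' s < q"
  shows "block_transversal q k c \<inter> block_transversal q k c' = {} \<longleftrightarrow> (\<forall>s<k. c s \<noteq> c' s)"
proof -
  have "block_transversal q k c \<inter> block_transversal q k c' = {} \<longleftrightarrow>
      (\<forall>s<k. \<forall>s'<k. s * q + c s \<noteq> s' * q + c' s')"
    unfolding block_transversal_def by fastforce
  also have "\<dots> \<longleftrightarrow> (\<forall>s<k. c s \<noteq> c' s)"
  proof -
    have "s * q + c s \<noteq> s' * q + c' s' \<longleftrightarrow> s \<noteq> s' \<or> c s \<noteq> c' s'" if "s < k" "s' < k" for s s'
      using mult_add_eq_mult_add_iff[of "c s" q "c' s'" s s'] assms that by blast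
    then show ?thesis
      by auto
  qed
  finally show ?thesis .
qed

definition subset_transversal :: "nat \<Rightarrow> nat \<Rightarrow> nat set \<Rightarrow> (nat \<Rightarrow> nat) \<Rightarrow> nat set" where
  "subset_transversal q k U v = block_transversal q k (\<lambda>s. v (if s \<in> U then s else Min U))"

lemma subset_transversal_in_kneser_vertices:
  assumes "finite U" "U \<noteq> {}" "\<forall>r\<in>U. v r < q" "q * k \<le> n"
  shows "subset_transversal q k U v \<in> kneser_vertices n k"
  unfolding subset_transversal_def using assms Min_in by (intro block_transversal_in_kneser_vertices) auto

lemma subset_transversal_disjoint_iff:
  assumes U: "U \<subseteq> {0..<k}" "U \<noteq> {}" and vw: "\<forall>r\<in>U. v r < q" "\<forall>r\<in>U. w r < q"
  shows "subset_transversal q k U v \<inter> subset_transversal q k U w = {} \<longleftrightarrow> (\<forall>r\<in>U. v r \<noteq> w r)"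
proof -
  let ?g = "\<lambda>s. if s \<in> U then s else Min U"
  have "finite U"
    using U(1) finite_subset by blast
  then have g: "?g ` {0..<k} = U"
    using U Min_in by force
  have "subset_transversal q k U v \<inter> subset_transversal q k U w = {} \<longleftrightarrow>
      (\<forall>s<k. v (?g s) \<noteq> w (?g s))"
    unfolding subset_transversal_def using vw g by (intro block_transversal_disjoint_iff) auto
  also have "\<dots> \<longleftrightarrow> (\<forall>r\<in>?g ` {0..<k}. v r \<noteq> w r)"
    by auto
  finally show ?thesis
    unfolding g .
qed

lemma card_nonempty_subsets_preimage:
  assumes h: "bij_betw h A (Pow T - {{}})" and D: "D \<subseteq> T" "finite T"
  shows "card {i\<in>A. h i \<subseteq> D} = 2 ^ card D - 1"
proof -
  have "inj_on h {i\<in>A. h i \<subseteq> D}"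
    using h unfolding bij_betw_def by (auto intro: inj_on_subset)
  moreover have "h ` {i\<in>A. h i \<subseteq> D} = {U \<in> h ` A. U \<subseteq> D}"
    by blast
  moreover have "{U \<in> h ` A. U \<subseteq> D} = Pow D - {{}}"
    using bij_betw_imp_surj_on[OF h] D(1) by blast
  ultimately have "card {i\<in>A. h i \<subseteq> D} = card (Pow D - {{}})"
    by (metis card_image)
  also have "\<dots> = 2 ^ card D - 1"
    using finite_subset[OF D] by (simp add: card_Diff_singleton card_Pow)
  finally show ?thesis .
qed

definition transversal_tuple ::
    "nat \<Rightarrow> nat \<Rightarrow> nat \<Rightarrow> (nat \<Rightarrow> nat set) \<Rightarrow> (nat \<Rightarrow> nat) \<Rightarrow> nat \<Rightarrow> nat set" where
  "transversal_tuple l q k h v =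
     (\<lambda>i\<in>{0..<l}. if h i = {} then {0..<k} else subset_transversal q k (h i) v)"

lemma transversal_tuple_in_xor_kneser_vertices:
  assumes h: "\<And>i. h i \<subseteq> {0..<t}" and v: "v \<in> {0..<t} \<rightarrow>\<^sub>E {0..<q}"
    and "q * k \<le> n" "k \<le> n"
  shows "transversal_tuple l q k h v \<in> xor_kneser_vertices l n k"
proof -
  have "subset_transversal q k (h i) v \<in> kneser_vertices n k" if "h i \<noteq> {}" for i
    using h[of i] v that assms(3) finite_subset[OF h]
    by (intro subset_transversal_in_kneser_vertices) (auto simp: PiE_iff)
  moreover have "{0..<k} \<in> kneser_vertices n k"
    using \<open>k \<le> n\<close> unfolding kneser_vertices_def by simp
  ultimately show ?thesis
    unfolding xor_kneser_vertices_def transversal_tuple_def by simp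
qed

lemma kneser_adj_transversal_tuple_iff:
  assumes "i < l" "h i \<subseteq> {0..<k}" "0 < k"
    and "\<forall>r\<in>h i. v r < q" "\<forall>r\<in>h i. w r < q"
  shows "kneser_adj (transversal_tuple l q k h v i) (transversal_tuple l q k h w i) \<longleftrightarrow>
    h i \<noteq> {} \<and> (\<forall>r\<in>h i. v r \<noteq> w r)"
proof (cases "h i = {}")
  case False
  then show ?thesis
    using subset_transversal_disjoint_iff[OF assms(2) False assms(4,5)] assms(1)
    unfolding transversal_tuple_def kneser_adj_def by simp
next
  case True
  then show ?thesis
    using assms(1,3) unfolding transversal_tuple_def kneser_adj_def by auto
qed

lemma xor_kneser_adj_transversal_tuple:
  assumes h: "bij_betw h {i\<in>{0..<l}. h i \<noteq> {}} (Pow {0..<t} - {{}})" "\<And>i. h i \<subseteq> {0..<t}"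
    and k: "0 < k" "t \<le> k"
    and vw: "v \<in> {0..<t} \<rightarrow>\<^sub>E {0..<q}" "w \<in> {0..<t} \<rightarrow>\<^sub>E {0..<q}" "v \<noteq> w"
  shows "xor_kneser_adj l (transversal_tuple l q k h v) (transversal_tuple l q k h w)"
proof -
  define D where "D = {r\<in>{0..<t}. v r \<noteq> w r}"
  have "D \<noteq> {}"
    using vw PiE_ext[of v "{0..<t}" _ w] unfolding D_def by blast
  have "kneser_adj (transversal_tuple l q k h v i) (transversal_tuple l q k h w i) \<longleftrightarrow>
      h i \<noteq> {} \<and> h i \<subseteq> D" if "i < l" for i
  proof -
    have "h i \<subseteq> {0..<k}" "\<forall>r\<in>h i. v r < q" "\<forall>r\<in>h i. w r < q"
      using h(2)[of i] k(2) vw(1,2) by (auto simp: PiE_iff)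
    with kneser_adj_transversal_tuple_iff[OF that _ k(1)] show ?thesis
      using h(2)[of i] unfolding D_def by auto
  qed
  then have "{i\<in>{0..<l}. kneser_adj (transversal_tuple l q k h v i) (transversal_tuple l q k h w i)}
      = {i\<in>{i\<in>{0..<l}. h i \<noteq> {}}. h i \<subseteq> D}"
    by auto
  moreover have "card {i\<in>{i\<in>{0..<l}. h i \<noteq> {}}. h i \<subseteq> D} = 2 ^ card D - 1"
    using h(1) unfolding D_def by (intro card_nonempty_subsets_preimage) auto
  moreover have "card D \<noteq> 0"
    using \<open>D \<noteq> {}\<close> unfolding D_def by simp
  ultimately show ?thesis
    unfolding xor_kneser_adj_def by simp
qed

lemma ex_nonempty_subsets_indexing:
  fixes l t :: nat
  assumes "2 ^ t \<le> l + 1"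
  shows "\<exists>h. bij_betw h {i\<in>{0..<l}. h i \<noteq> {}} (Pow {0..<t} - {{}}) \<and> (\<forall>i. h i \<subseteq> {0..<t})"
proof -
  obtain h where h: "bij_betw h {0..<(2::nat) ^ t - 1} (Pow {0..<t} - {{}})"
    using ex_bij_betw_nat_finite[of "Pow {0..<t} - {{}}"] by (auto simp: card_Diff_singleton card_Pow)
  define h' where "h' i = (if i < 2 ^ t - 1 then h i else {})" for i
  have "h i \<subseteq> {0..<t} \<and> h i \<noteq> {}" if "i < 2 ^ t - 1" for i
    using bij_betwE[OF h] that by auto
  then have "{i\<in>{0..<l}. h' i \<noteq> {}} = {0..<2 ^ t - 1}" "\<forall>i. h' i \<subseteq> {0..<t}"
    using assms unfolding h'_def by auto
  moreover have "bij_betw h' {0..<2 ^ t - 1} (Pow {0..<t} - {{}})"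
    using h by (rule bij_betw_cong[THEN iffD1, rotated]) (simp add: h'_def)
  ultimately show ?thesis
    by metis
qed

lemma xor_kneser_clique_of_card_power:
  assumes t: "1 \<le> t" "t \<le> k" "2 ^ t \<le> l + 1" and q: "q * k \<le> n"
  shows "\<exists>C. is_xor_kneser_clique l n k C \<and> card C = q ^ t"
proof (cases "q = 0")
  case True
  then show ?thesis
    using t(1) by (intro exI[of _ "{}"]) (simp add: is_xor_kneser_clique_def)
next
  case False
  then have "k \<le> q * k"
    by simp
  with q have "k \<le> n"
    by linarith
  obtain h where h: "bij_betw h {i\<in>{0..<l}. h i \<noteq> {}} (Pow {0..<t} - {{}})" "\<And>i. h i \<subseteq> {0..<t}"
    using ex_nonempty_subsets_indexing[OF t(3)] by blast
  let ?V = "{0..<t} \<rightarrow>\<^sub>E {0..<q}"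
  have "is_xor_kneser_clique l n k (transversal_tuple l q k h ` ?V) \<and>
      card (transversal_tuple l q k h ` ?V) = card ?V"
    using t h q \<open>k \<le> n\<close>
    by (intro xor_kneser_clique_image transversal_tuple_in_xor_kneser_vertices
        xor_kneser_adj_transversal_tuple) auto
  then show ?thesis
    by (auto simp: card_PiE)
qed

lemma two_pow_floor_log2_le:
  assumes "0 < m"
  shows "2 ^ nat \<lfloor>log 2 (real m)\<rfloor> \<le> m"
proof -
  have "\<lfloor>log 2 (real m)\<rfloor> = int (nat \<lfloor>log 2 (real m)\<rfloor>)"
    using assms by simp
  then show ?thesis
    using floor_log_nat_eq_powr_iff[of 2 m "nat \<lfloor>log 2 (real m)\<rfloor>"] assms by simp
qed

lemma one_le_floor_log2:
  assumes "2 \<le> m"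
  shows "1 \<le> nat \<lfloor>log 2 (real m)\<rfloor>"
proof -
  have "1 \<le> log 2 (real m)"
    using assms by simp
  then show ?thesis
    by linarith
qed

theorem theorem1p3:
  fixes l n k :: nat
  assumes "l \<ge> 1" and "k \<ge> 1" and "n \<ge> 1"
  shows "f_xor l n k \<le> 2 ^ (l div 2) * fact (l div 2) * n ^ ((l + 1) div 2) \<and>
         (k \<ge> nat \<lfloor>log 2 (real (l + 1))\<rfloor> \<longrightarrow>
          f_xor l n k \<ge> (n div k) ^ nat \<lfloor>log 2 (real (l + 1))\<rfloor>)"
proof (intro conjI impI)
  show "f_xor l n k \<le> 2 ^ (l div 2) * fact (l div 2) * n ^ ((l + 1) div 2)"
    using assms(2) by (intro f_xor_le xor_kneser_clique_card_le) auto
next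
  let ?t = "nat \<lfloor>log 2 (real (l + 1))\<rfloor>"
  assume "k \<ge> ?t"
  moreover have "1 \<le> ?t" "2 ^ ?t \<le> l + 1"
    using assms(1) one_le_floor_log2[of "l + 1"] two_pow_floor_log2_le[of "l + 1"] by auto
  moreover have "n div k * k \<le> n"
    by (rule div_times_less_eq_dividend)
  ultimately obtain C where C: "is_xor_kneser_clique l n k C" "card C = (n div k) ^ ?t"
    using xor_kneser_clique_of_card_power[of ?t k l "n div k" n] by blast
  then show "f_xor l n k \<ge> (n div k) ^ ?t"
    using card_le_f_xor[OF C(1)] by simp
qed

end
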